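(* Let $\Delta\ge 3$ be an integer and let $c_1,\dots,c_\Delta$ be defined by $c_\Delta=\frac{1}{\Delta}$ and $ic_i+c_{i+1}=1$ for $i=1,\dots,\Delta-1$. Let $\varepsilon>0$ and $j\in\{1,\dots,\Delta\}$. Then there are infinitely many graphs $G\in\mathcal{G}_\Delta$ for which the inequality $$\alpha(G)\ge \varepsilon|V_j(G)|+\sum_{i=1}^{\Delta} c_i|V_i(G)|$$ does not hold.
   Context: All graphs are simple, finite and undirected. For an integer $\Delta\ge 3$, $\mathcal{G}_\Delta$ denotes the set of connected graphs $G\neq K_{\Delta+1}$ with maximum degree $\Delta$. For a graph $G$ and $i\ge 1$, $V_i(G)$ is the set of vertices of $G$ of degree $i$. $\alpha(G)$ is the independence number of $G$. *)

theory Defs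
  imports Complex_Main
begin

definition simple_graph :: "'a set \<Rightarrow> 'a set set \<Rightarrow> bool" where
  "simple_graph V E \<longleftrightarrow> finite V \<and>
     (\<forall>e\<in>E. \<exists>u v. e = {u, v} \<and> u \<noteq> v \<and> u \<in> V \<and> v \<in> V)"

definition degree :: "'a set \<Rightarrow> 'a set set \<Rightarrow> 'a \<Rightarrow> nat" where
  "degree V E v = card {u \<in> V. {u, v} \<in> E}"

definition adj_rel :: "'a set set \<Rightarrow> ('a \<times> 'a) set" where
  "adj_rel E = {(u, v). {u, v} \<in> E}"

definition connected_graph :: "'a set \<Rightarrow> 'a set set \<Rightarrow> bool" where
  "connected_graph V E \<longleftrightarrow> V \<noteq> {} \<and> (\<forall>u\<in>V. \<forall>v\<in>V. (u, v) \<in> (adj_rel E)\<^sup>*)"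

definition max_degree_is :: "'a set \<Rightarrow> 'a set set \<Rightarrow> nat \<Rightarrow> bool" where
  "max_degree_is V E d \<longleftrightarrow> (\<forall>v\<in>V. degree V E v \<le> d) \<and> (\<exists>v\<in>V. degree V E v = d)"

definition is_complete_graph :: "'a set \<Rightarrow> 'a set set \<Rightarrow> nat \<Rightarrow> bool" where
  "is_complete_graph V E n \<longleftrightarrow> card V = n \<and> (\<forall>u\<in>V. \<forall>v\<in>V. u \<noteq> v \<longrightarrow> {u, v} \<in> E)"

definition in_G_Delta :: "nat \<Rightarrow> 'a set \<Rightarrow> 'a set set \<Rightarrow> bool" where
  "in_G_Delta d V E \<longleftrightarrow> simple_graph V E \<and> connected_graph V E \<and> max_degree_is V E d
     \<and> \<not> is_complete_graph V E (d + 1)"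

definition vertices_of_degree :: "'a set \<Rightarrow> 'a set set \<Rightarrow> nat \<Rightarrow> 'a set" where
  "vertices_of_degree V E i = {v \<in> V. degree V E v = i}"

definition independent_set :: "'a set \<Rightarrow> 'a set set \<Rightarrow> 'a set \<Rightarrow> bool" where
  "independent_set V E S \<longleftrightarrow> S \<subseteq> V \<and> (\<forall>u\<in>S. \<forall>v\<in>S. {u, v} \<notin> E)"

definition independence_number :: "'a set \<Rightarrow> 'a set set \<Rightarrow> nat" where
  "independence_number V E = Max {card S | S. independent_set V E S}"

end

theory Submission imports Defs begin

text \<open>
  For \<open>1 \<le> s < \<Delta>\<close> take a cyclic chain of \<open>m \<ge> 2\<close> beads, each bead a \<open>K\<^sub>\<Delta>\<close> with a
  \<open>K\<^sub>s\<^sub>+\<^sub>1\<close> attached to it by one edge, consecutive beads being joined by one edge. In a bead,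
  the three vertices of the \<open>K\<^sub>\<Delta>\<close> carrying an extra edge have degree \<open>\<Delta>\<close>, the other \<open>\<Delta> - 3\<close>
  have degree \<open>\<Delta> - 1\<close>; the attachment vertex of the \<open>K\<^sub>s\<^sub>+\<^sub>1\<close> has degree \<open>s + 1\<close> and the other
  \<open>s\<close> have degree \<open>s\<close>. The recurrence gives \<open>c\<^sub>\<Delta>\<^sub>-\<^sub>1 = c\<^sub>\<Delta> = 1/\<Delta>\<close> and \<open>s c\<^sub>s + c\<^sub>s\<^sub>+\<^sub>1 = 1\<close>,
  so each bead contributes exactly 2 to \<open>\<Sigma> c\<^sub>i |V\<^sub>i|\<close>, whereas an independent set meets each of
  the two cliques of a bead at most once. Hence \<open>\<alpha> \<le> 2m = \<Sigma> c\<^sub>i |V\<^sub>i|\<close>, and choosing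
  \<open>s = min j (\<Delta> - 1)\<close> makes \<open>V\<^sub>j\<close> nonempty, so the \<open>\<epsilon>\<close>-term breaks the inequality.
\<close>

lemma adj_rel_sym: "(u, v) \<in> adj_rel E \<Longrightarrow> (v, u) \<in> adj_rel E"
  by (simp add: adj_rel_def insert_commute)

lemma connected_graphI_root:
  assumes "r \<in> V" and to_root: "\<And>v. v \<in> V \<Longrightarrow> (v, r) \<in> (adj_rel E)\<^sup>*"
  shows "connected_graph V E"
proof -
  have "(adj_rel E)\<inverse> = adj_rel E" using adj_rel_sym by auto
  then have from_root: "(r, v) \<in> (adj_rel E)\<^sup>*" if "v \<in> V" for v
    using rtrancl_converseI[OF to_root[OF that]] by simp
  show ?thesis
    unfolding connected_graph_def
  proof (intro conjI ballI)
    show "V \<noteq> {}" using \<open>r \<in> V\<close> by blast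
    fix u v assume "u \<in> V" "v \<in> V"
    then show "(u, v) \<in> (adj_rel E)\<^sup>*" by (rule rtrancl_trans[OF to_root from_root])
  qed
qed

lemma sum_vertices_of_degree:
  fixes f :: "nat \<Rightarrow> 'b :: comm_semiring_1"
  assumes "finite V" "finite A" and "\<And>v. v \<in> V \<Longrightarrow> degree V E v \<in> A"
  shows "(\<Sum>i\<in>A. f i * of_nat (card (vertices_of_degree V E i))) = (\<Sum>v\<in>V. f (degree V E v))"
proof -
  have "(\<Sum>v\<in>V. f (degree V E v)) = (\<Sum>i\<in>A. \<Sum>v\<in>vertices_of_degree V E i. f (degree V E v))"
    using assms unfolding vertices_of_degree_def by (intro sum.group[symmetric]) auto
  also have "\<dots> = (\<Sum>i\<in>A. f i * of_nat (card (vertices_of_degree V E i)))"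
    unfolding vertices_of_degree_def by (simp add: mult.commute)
  finally show ?thesis by simp
qed

lemma independence_number_le_clique_cover:
  assumes "finite K" and "f ` V \<subseteq> K"
    and clique: "\<And>u v. u \<in> V \<Longrightarrow> v \<in> V \<Longrightarrow> u \<noteq> v \<Longrightarrow> f u = f v \<Longrightarrow> {u, v} \<in> E"
  shows "independence_number V E \<le> card K"
proof -
  have card_le: "card S \<le> card K" if "independent_set V E S" for S
  proof -
    have S: "S \<subseteq> V" "\<And>u v. u \<in> S \<Longrightarrow> v \<in> S \<Longrightarrow> {u, v} \<notin> E"
      using that by (auto simp: independent_set_def)
    have "inj_on f S"
    proof (rule inj_onI)
      fix u v assume "u \<in> S" "v \<in> S" "f u = f v"
      then show "u = v" using S clique[of u v] by blast
    qed
    moreover have "f ` S \<subseteq> K" using S(1) assms(2) by blast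
    ultimately show ?thesis using assms(1) by (rule card_inj_on_le)
  qed
  have "{card S | S. independent_set V E S} \<subseteq> {..card K}"
    using card_le by blast
  then have "finite {card S | S. independent_set V E S}"
    by (rule finite_subset) simp
  moreover have "independent_set V E {}" by (simp add: independent_set_def)
  ultimately show ?thesis
    unfolding independence_number_def using card_le by (intro Max.boundedI) blast+
qed

text \<open>
  Vertex \<open>b * L + r\<close> (with \<open>r < L\<close>) is position \<open>r\<close> of bead \<open>b\<close>. Positions \<open>0..<D\<close> form a
  \<open>K\<^sub>D\<close>, positions \<open>D..D + s\<close> a \<open>K\<^sub>s\<^sub>+\<^sub>1\<close>, joined by the edge between positions 2 and \<open>D\<close>;
  position 1 of bead \<open>b\<close> is joined to position 0 of bead \<open>Suc b mod m\<close>.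
\<close>
locale necklace =
  fixes D s m :: nat
  assumes D_ge_3: "3 \<le> D" and s_pos: "1 \<le> s" and s_less_D: "s < D" and m_ge_2: "2 \<le> m"
begin

definition L :: nat where "L = D + s + 1"

definition verts :: "nat set" where "verts = {..<m * L}"

definition bead_adj :: "nat \<Rightarrow> nat \<Rightarrow> bool" where
  "bead_adj r r' \<longleftrightarrow> (r < D \<and> r' < D) \<or> (D \<le> r \<and> D \<le> r') \<or> (r = 2 \<and> r' = D) \<or> (r = D \<and> r' = 2)"

definition link :: "nat \<Rightarrow> nat \<Rightarrow> bool" where
  "link u v \<longleftrightarrow> u mod L = 1 \<and> v mod L = 0 \<and> v div L = Suc (u div L) mod m"

definition adj :: "nat \<Rightarrow> nat \<Rightarrow> bool" where
  "adj u v \<longleftrightarrow> (u div L = v div L \<and> bead_adj (u mod L) (v mod L)) \<or> link u v \<or> link v u"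

definition edges :: "nat set set" where
  "edges = {{u, v} | u v. u \<in> verts \<and> v \<in> verts \<and> u \<noteq> v \<and> adj u v}"

definition pos_degree :: "nat \<Rightarrow> nat" where
  "pos_degree r = (if r < D then (if r \<le> 2 then D else D - 1) else if r = D then s + 1 else s)"

lemma D_less_L: "D < L" and Suc_D_less_L: "Suc D < L" and one_less_L: "1 < L" and L_pos: "0 < L"
  using s_pos by (auto simp: L_def)

lemma bead_div [simp]: "r < L \<Longrightarrow> (b * L + r) div L = b"
  and bead_mod [simp]: "r < L \<Longrightarrow> (b * L + r) mod L = r"
  using D_less_L by auto

lemma bead_Suc_div [simp]: "Suc (b * L) div L = b"
  and bead_Suc_mod [simp]: "Suc (b * L) mod L = 1"
  using bead_div[of 1 b] bead_mod[of 1 b] one_less_L by simp_all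

lemma in_verts_iff: "u \<in> verts \<longleftrightarrow> u div L < m"
  using D_less_L by (simp add: verts_def div_less_iff_less_mult)

lemma bead_in_verts: "b < m \<Longrightarrow> r < L \<Longrightarrow> b * L + r \<in> verts"
  by (simp add: in_verts_iff)

lemma bead_eq_iff: "r < L \<Longrightarrow> u = b * L + r \<longleftrightarrow> u div L = b \<and> u mod L = r"
  by (metis bead_div bead_mod div_mult_mod_eq)

lemma card_verts: "card verts = m * L"
  by (simp add: verts_def)

lemma m_le_card_verts: "m \<le> card verts"
  using L_pos by (simp add: card_verts)

lemma Suc_mod_neq: "a < m \<Longrightarrow> Suc a mod m \<noteq> a"
  using m_ge_2 by (cases "Suc a = m") auto

lemma Suc_mod_eq_iff: "b < m \<Longrightarrow> a < m \<and> Suc a mod m = b \<longleftrightarrow> a = (b + m - 1) mod m"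
  using m_ge_2 by (cases "Suc a = m"; cases b) (auto simp: mod_if)

lemma adj_sym: "adj u v = adj v u"
  unfolding adj_def bead_adj_def by auto

lemma edge_iff: "{u, v} \<in> edges \<longleftrightarrow> u \<in> verts \<and> v \<in> verts \<and> u \<noteq> v \<and> adj u v"
  unfolding edges_def using adj_sym by (auto simp: doubleton_eq_iff)

lemma simple_graph: "simple_graph verts edges"
  unfolding simple_graph_def edges_def verts_def by auto

definition bead_nbrs :: "nat \<Rightarrow> nat set" where
  "bead_nbrs r = {r'. r' < L \<and> r' \<noteq> r \<and> bead_adj r' r}"

definition link_nbrs :: "nat \<Rightarrow> nat set" where
  "link_nbrs v = {u \<in> verts. link u v \<or> link v u}"

lemma link_neq: "link u v \<Longrightarrow> u \<noteq> v"
  by (auto simp: link_def)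

lemma nbrs_eq:
  assumes "b < m" "r < L"
  shows "{u \<in> verts. {u, b * L + r} \<in> edges} = (\<lambda>r'. b * L + r') ` bead_nbrs r \<union> link_nbrs (b * L + r)"
proof (intro set_eqI iffI)
  fix u assume "u \<in> {u \<in> verts. {u, b * L + r} \<in> edges}"
  then have u: "u \<in> verts" "u \<noteq> b * L + r" "adj u (b * L + r)"
    by (auto simp: edge_iff)
  show "u \<in> (\<lambda>r'. b * L + r') ` bead_nbrs r \<union> link_nbrs (b * L + r)"
  proof (cases "link u (b * L + r) \<or> link (b * L + r) u")
    case True
    then show ?thesis using u by (simp add: link_nbrs_def)
  next
    case False
    then have "u div L = b" "bead_adj (u mod L) r"
      using u(3) assms by (auto simp: adj_def)
    moreover have "u = u div L * L + u mod L" by (rule div_mult_mod_eq[symmetric])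
    ultimately have "u = b * L + u mod L" "u mod L \<in> bead_nbrs r"
      using u(2) D_less_L by (auto simp: bead_nbrs_def)
    then show ?thesis by blast
  qed
next
  fix u assume "u \<in> (\<lambda>r'. b * L + r') ` bead_nbrs r \<union> link_nbrs (b * L + r)"
  then show "u \<in> {u \<in> verts. {u, b * L + r} \<in> edges}"
  proof
    assume "u \<in> (\<lambda>r'. b * L + r') ` bead_nbrs r"
    then obtain r' where "u = b * L + r'" "r' < L" "r' \<noteq> r" "bead_adj r' r"
      by (auto simp: bead_nbrs_def)
    then show ?thesis using assms bead_in_verts by (simp add: edge_iff adj_def)
  next
    assume "u \<in> link_nbrs (b * L + r)"
    then show ?thesis
      using assms bead_in_verts link_neq by (auto simp: link_nbrs_def edge_iff adj_def)
  qed
qed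

lemma card_bead_nbrs:
  assumes "r < L"
  shows "card (bead_nbrs r) = (if r < D then (if r = 2 then D else D - 1) else if r = D then s + 1 else s)"
proof -
  consider "r < D" "r \<noteq> 2" | "r = 2" | "r = D" | "D < r" by linarith
  then show ?thesis
  proof cases
    assume "r < D" "r \<noteq> 2"
    then have "bead_nbrs r = {..<D} - {r}"
      using D_less_L by (auto simp: bead_nbrs_def bead_adj_def)
    then show ?thesis using \<open>r < D\<close> \<open>r \<noteq> 2\<close> by simp
  next
    assume "r = 2"
    then have "bead_nbrs r = insert D ({..<D} - {2})"
      using D_less_L D_ge_3 by (auto simp: bead_nbrs_def bead_adj_def)
    then show ?thesis using \<open>r = 2\<close> D_ge_3 by simp
  next
    assume "r = D"
    then have "bead_nbrs r = insert 2 {D<..<L}"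
      using D_less_L D_ge_3 by (auto simp: bead_nbrs_def bead_adj_def)
    then show ?thesis using \<open>r = D\<close> D_ge_3 by (simp add: L_def)
  next
    assume "D < r"
    then have "bead_nbrs r = {D..<L} - {r}"
      using assms D_ge_3 by (auto simp: bead_nbrs_def bead_adj_def)
    then show ?thesis using \<open>D < r\<close> assms by (simp add: L_def)
  qed
qed

lemma link_nbrs_eq:
  assumes "b < m" "r < L"
  shows "link_nbrs (b * L + r) =
    (if r = 0 then {(b + m - 1) mod m * L + 1} else if r = 1 then {Suc b mod m * L} else {})"
proof (intro set_eqI)
  fix u
  have "u \<in> link_nbrs (b * L + r) \<longleftrightarrow>
      (r = 0 \<and> (u div L < m \<and> Suc (u div L) mod m = b) \<and> u mod L = 1) \<or>
      (r = 1 \<and> u div L = Suc b mod m \<and> u mod L = 0)"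
    using assms m_ge_2 by (auto simp: link_nbrs_def link_def in_verts_iff)
  also have "\<dots> \<longleftrightarrow> (r = 0 \<and> u = (b + m - 1) mod m * L + 1) \<or> (r = 1 \<and> u = Suc b mod m * L)"
    unfolding Suc_mod_eq_iff[OF assms(1)] bead_eq_iff[OF one_less_L] bead_eq_iff[OF L_pos, simplified] ..
  finally show "u \<in> link_nbrs (b * L + r) \<longleftrightarrow>
      u \<in> (if r = 0 then {(b + m - 1) mod m * L + 1} else if r = 1 then {Suc b mod m * L} else {})"
    by auto
qed

lemma pred_mod_neq: "b < m \<Longrightarrow> (b + m - 1) mod m \<noteq> b"
  using Suc_mod_eq_iff[of b "(b + m - 1) mod m"] Suc_mod_neq[of b] by auto

lemma degree_bead:
  assumes "b < m" "r < L"
  shows "degree verts edges (b * L + r) = pos_degree r"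
proof -
  have "(\<lambda>r'. b * L + r') ` bead_nbrs r \<inter> link_nbrs (b * L + r) = {}"
    using link_nbrs_eq[OF assms] assms pred_mod_neq Suc_mod_neq m_ge_2 one_less_L
    by (auto simp: bead_nbrs_def bead_eq_iff)
  then have "degree verts edges (b * L + r) = card (bead_nbrs r) + card (link_nbrs (b * L + r))"
    unfolding degree_def nbrs_eq[OF assms]
    by (subst card_Un_disjoint) (auto simp: bead_nbrs_def link_nbrs_def verts_def card_image)
  then show ?thesis
    using card_bead_nbrs[OF assms(2)] link_nbrs_eq[OF assms] D_ge_3 by (simp add: pos_degree_def)
qed

lemma degree_eq:
  assumes "v \<in> verts"
  shows "degree verts edges v = pos_degree (v mod L)"
proof -
  have "degree verts edges (v div L * L + v mod L) = pos_degree (v mod L)"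
    using degree_bead assms L_pos by (simp add: in_verts_iff)
  then show ?thesis by (simp only: div_mult_mod_eq)
qed

lemma pos_degree_bounds: "1 \<le> pos_degree r" "pos_degree r \<le> D"
  using s_pos s_less_D D_ge_3 by (auto simp: pos_degree_def)

lemma max_degree: "max_degree_is verts edges D"
  unfolding max_degree_is_def
proof
  show "\<forall>v\<in>verts. degree verts edges v \<le> D"
    by (simp add: degree_eq pos_degree_bounds)
  have "0 \<in> verts" using m_ge_2 by (simp add: in_verts_iff)
  moreover have "degree verts edges 0 = D"
    using degree_eq[OF \<open>0 \<in> verts\<close>] L_pos D_ge_3 by (simp add: pos_degree_def)
  ultimately show "\<exists>v\<in>verts. degree verts edges v = D" ..
qed

lemma adj_relI: "u \<in> verts \<Longrightarrow> v \<in> verts \<Longrightarrow> u \<noteq> v \<Longrightarrow> adj u v \<Longrightarrow> (u, v) \<in> adj_rel edges"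
  by (simp add: adj_rel_def edge_iff)

lemma within_bead_adj_rel:
  "b < m \<Longrightarrow> r < L \<Longrightarrow> r' < L \<Longrightarrow> r \<noteq> r' \<Longrightarrow> bead_adj r r' \<Longrightarrow> (b * L + r, b * L + r') \<in> adj_rel edges"
  by (rule adj_relI) (auto simp: bead_in_verts adj_def)

lemma reaches_bead_start:
  assumes "b < m" "r < L"
  shows "(b * L + r, b * L) \<in> (adj_rel edges)\<^sup>*"
proof -
  have to_0: "(b * L + r', b * L + 0) \<in> (adj_rel edges)\<^sup>*" if "r' < D" for r'
    using within_bead_adj_rel[of b r' 0] that assms D_less_L by (cases "r' = 0") (auto simp: bead_adj_def)
  show ?thesis
  proof (cases "r < D")
    case True
    then show ?thesis using to_0 by simp
  next
    case False
    have "(b * L + r, b * L + D) \<in> (adj_rel edges)\<^sup>*"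
      using within_bead_adj_rel[of b r D] False assms D_less_L by (cases "r = D") (auto simp: bead_adj_def)
    moreover have "(b * L + D, b * L + 2) \<in> adj_rel edges"
      using within_bead_adj_rel[of b D 2] assms D_less_L D_ge_3 by (simp add: bead_adj_def)
    ultimately show ?thesis using to_0[of 2] D_ge_3 by (simp add: rtrancl_into_rtrancl converse_rtrancl_into_rtrancl)
  qed
qed

lemma connected_graph: "connected_graph verts edges"
proof (rule connected_graphI_root)
  show "0 \<in> verts" using m_ge_2 by (simp add: in_verts_iff)
  have bead_to_0: "(b * L, 0) \<in> (adj_rel edges)\<^sup>*" if "b < m" for b
    using that
  proof (induction b)
    case (Suc b)
    have "link (b * L + 1) (Suc b * L)"
      using Suc.prems one_less_L by (simp add: link_def)
    then have "(Suc b * L, b * L + 1) \<in> adj_rel edges"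
      using Suc.prems bead_in_verts[of b 1] bead_in_verts[of "Suc b" 0] one_less_L link_neq
      by (intro adj_relI) (auto simp: adj_def)
    then show ?case
      using reaches_bead_start[of b 1] Suc one_less_L by (simp add: converse_rtrancl_into_rtrancl rtrancl_trans)
  qed simp
  fix v assume "v \<in> verts"
  then have "(v div L * L + v mod L, 0) \<in> (adj_rel edges)\<^sup>*"
    using reaches_bead_start[of "v div L" "v mod L"] bead_to_0[of "v div L"] L_pos
    by (simp add: in_verts_iff)
  then show "(v, 0) \<in> (adj_rel edges)\<^sup>*" by (simp only: div_mult_mod_eq)
qed

lemma independence_number_le: "independence_number verts edges \<le> 2 * m"
proof -
  have "independence_number verts edges \<le> card ({..<m} \<times> (UNIV :: bool set))"
  proof (rule independence_number_le_clique_cover[where f = "\<lambda>v. (v div L, v mod L < D)"])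
    show "(\<lambda>v. (v div L, v mod L < D)) ` verts \<subseteq> {..<m} \<times> UNIV"
      by (auto simp: in_verts_iff)
  qed (auto simp: edge_iff adj_def bead_adj_def)
  then show ?thesis by (simp add: card_cartesian_product)
qed

lemma sum_verts_mod: "(\<Sum>v\<in>verts. g (v mod L)) = of_nat m * (\<Sum>r<L. g r)"
proof -
  have "(\<Sum>v\<in>{b * L..<b * L + L}. g (v mod L)) = (\<Sum>r<L. g r)" for b
    using sum.shift_bounds_nat_ivl[of "\<lambda>v. g (v mod L)" 0 "b * L" L]
    by (simp add: atLeast0LessThan add.commute)
  then show ?thesis unfolding verts_def sum.nat_group[symmetric] by simp
qed

lemma bead_weight:
  fixes c :: "nat \<Rightarrow> real"
  assumes cD: "c D = 1 / real D" and rec: "\<forall>i\<in>{1..D - 1}. real i * c i + c (i + 1) = 1"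
  shows "(\<Sum>r<L. c (pos_degree r)) = 2"
proof -
  have "real (D - 1) * c (D - 1) + c D = 1" using bspec[OF rec, of "D - 1"] D_ge_3 by simp
  then have "real (D - 1) * c (D - 1) = real (D - 1) * (1 / real D)"
    using cD D_ge_3 by (simp add: of_nat_diff field_simps)
  moreover have "real (D - 1) \<noteq> 0" using D_ge_3 by simp
  ultimately have cD1: "c (D - 1) = 1 / real D" by (rule mult_left_cancel[THEN iffD1, rotated])
  have cs: "real s * c s + c (s + 1) = 1" using bspec[OF rec, of s] s_pos s_less_D by simp
  let ?g = "\<lambda>r. c (pos_degree r)"
  have split_L: "(\<Sum>r<L. ?g r) = (\<Sum>r<Suc D. ?g r) + (\<Sum>r\<in>{Suc D..<L}. ?g r)"
    using sum.atLeastLessThan_concat[of 0 "Suc D" L ?g] Suc_D_less_L by (simp add: lessThan_atLeast0)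
  have split_D: "(\<Sum>r<Suc D. ?g r) = (\<Sum>r<3. ?g r) + (\<Sum>r\<in>{3..<D}. ?g r) + ?g D"
    using sum.atLeastLessThan_concat[of 0 3 D ?g] D_ge_3 by (simp add: lessThan_atLeast0)
  have "(\<Sum>r<L. ?g r) = 3 * c D + real (D - 3) * c (D - 1) + (real s * c s + c (s + 1))"
    unfolding split_L split_D using D_ge_3 by (simp add: numeral_3_eq_3 pos_degree_def L_def)
  also have "\<dots> = 3 / real D + real (D - 3) / real D + 1"
    using cD cD1 cs by simp
  also have "\<dots> = 2"
    using D_ge_3 by (simp add: of_nat_diff field_simps)
  finally show ?thesis .
qed

lemma weighted_degree_sum:
  fixes c :: "nat \<Rightarrow> real"
  assumes "c D = 1 / real D" and "\<forall>i\<in>{1..D - 1}. real i * c i + c (i + 1) = 1"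
  shows "(\<Sum>i=1..D. c i * real (card (vertices_of_degree verts edges i))) = 2 * real m"
proof -
  have "(\<Sum>i=1..D. c i * real (card (vertices_of_degree verts edges i))) = (\<Sum>v\<in>verts. c (degree verts edges v))"
    using degree_eq pos_degree_bounds by (intro sum_vertices_of_degree) (auto simp: verts_def)
  also have "\<dots> = (\<Sum>v\<in>verts. c (pos_degree (v mod L)))" by (simp add: degree_eq)
  also have "\<dots> = 2 * real m"
    using bead_weight[OF assms] sum_verts_mod[of "\<lambda>r. c (pos_degree r)"] by simp
  finally show ?thesis .
qed

lemma finite_verts: "finite verts"
  by (simp add: verts_def)

lemma card_vertices_of_degree_pos:
  assumes "i = D \<or> i = s"
  shows "0 < card (vertices_of_degree verts edges i)"
proof -
  have "0 \<in> verts" "D + 1 \<in> verts"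
    using bead_in_verts[of 0 0] bead_in_verts[of 0 "D + 1"] m_ge_2 Suc_D_less_L by auto
  then have "vertices_of_degree verts edges i \<noteq> {}"
    using assms degree_eq L_pos Suc_D_less_L D_ge_3 by (auto simp: vertices_of_degree_def pos_degree_def)
  then show ?thesis
    using finite_verts by (simp add: card_gt_0_iff vertices_of_degree_def)
qed

lemma in_G_Delta: "in_G_Delta D verts edges"
proof -
  have "D + 1 < 2 * L" using D_less_L by simp
  also have "\<dots> \<le> card verts" using m_ge_2 by (simp add: card_verts)
  finally show ?thesis
    unfolding in_G_Delta_def is_complete_graph_def using simple_graph connected_graph max_degree by simp
qed

end

theorem theorem3:
  fixes \<Delta> j :: nat and c :: "nat \<Rightarrow> real" and \<epsilon> :: real
  assumes "\<Delta> \<ge> 3"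
    and "c \<Delta> = 1 / real \<Delta>"
    and "\<forall>i\<in>{1..\<Delta> - 1}. real i * c i + c (i + 1) = 1"
    and "\<epsilon> > 0"
    and "j \<in> {1..\<Delta>}"
  shows "\<forall>N. \<exists>(V :: nat set) E. card V \<ge> N \<and> in_G_Delta \<Delta> V E \<and>
           \<not> (real (independence_number V E) \<ge>
                \<epsilon> * real (card (vertices_of_degree V E j))
                + (\<Sum>i=1..\<Delta>. c i * real (card (vertices_of_degree V E i))))"
proof
  fix N :: nat
  define s where "s = min j (\<Delta> - 1)"
  interpret necklace \<Delta> s "N + 2"
    using assms(1,5) by unfold_locales (auto simp: s_def)
  have "0 < card (vertices_of_degree verts edges j)"
    using assms(5) by (intro card_vertices_of_degree_pos) (auto simp: s_def)
  then have "0 < \<epsilon> * real (card (vertices_of_degree verts edges j))"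
    using assms(4) by simp
  moreover have "real (independence_number verts edges) \<le> 2 * real (N + 2)"
    using of_nat_mono[OF independence_number_le, where 'a = real] by simp
  ultimately have "real (independence_number verts edges) < \<epsilon> * real (card (vertices_of_degree verts edges j))
      + (\<Sum>i=1..\<Delta>. c i * real (card (vertices_of_degree verts edges i)))"
    using weighted_degree_sum[OF assms(2,3)] by linarith
  moreover have "N \<le> card verts" using m_le_card_verts by simp
  ultimately show "\<exists>(V :: nat set) E. card V \<ge> N \<and> in_G_Delta \<Delta> V E \<and>
           \<not> (real (independence_number V E) \<ge>
                \<epsilon> * real (card (vertices_of_degree V E j))
                + (\<Sum>i=1..\<Delta>. c i * real (card (vertices_of_degree V E i))))"
    using in_G_Delta not_le by blast
qed

end
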